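(* Let $G\in\mathcal{C}$ and $N\unlhd G$. For each vertex $v$ of $\mathcal{G}_N$ there is a unique directed path in $\mathcal{G}_N$ from $(G,N,1_N)$ to $v$.
   Context: All groups are finite. $\mathcal{C}$ is the class of finite groups $G$ such that every subgroup and quotient group of $G$ is either abelian or contains a non-central abelian normal subgroup. $\psi^x(g)=\psi(xgx^{-1})$, $\psi^G$ induced character, $1_N$ trivial character. An $N$-linear character triple of $G$ is $(H,A,\vartheta)$ with $H\le G$, $A\unlhd H$, $\vartheta$ a linear character of $A$ invariant in $H$, and $\ker(\vartheta^G)=N$. For $B\unlhd M\le G$ and linear $\lambda$ on $B$, $\widetilde{\operatorname{Lin}}(M|\lambda)$ is the set of linear characters of $M$ whose restriction to $B$ contains $\lambda$ and whose induction to $G$ has kernel $N$. For each triple a normal subgroup $\mathcal{A}=\mathcal{A}_{(H,A,\vartheta)}$ of $H$ is fixed, of maximal order among normal subgroups of $H$ containing $\ker\vartheta$ with abelian quotient by $\ker\vartheta$. $\operatorname{Aut}(\mathbb{C}|\vartheta)\times H$ (field automorphisms of $\mathbb{C}$ fixing $\mathbb{Q}(\vartheta)$, times $H$) acts on $\widetilde{\operatorname{Lin}}(\mathcal{A}|\vartheta)$ by $(\sigma,h)\cdot\varphi=\sigma\circ\varphi^h$; fix orbit representatives $\mathfrak{Lin}(\mathcal{A}|\vartheta)$. If $H\neq A$, $Cl(H,A,\vartheta)=\{(I_H(\varphi),\mathcal{A},\varphi):\varphi\in\mathfrak{Lin}(\mathcal{A}|\vartheta)\}$ with $I_H(\varphi)=\{h\in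 H:\varphi^h=\varphi\}$; if $H=A$, $Cl(H,A,\vartheta)=\emptyset$. $\mathcal{G}_N$ is the directed graph whose vertices are the $N$-linear character triples $v$ reachable by a directed path from $(G,N,1_N)$ in the graph with an edge $(u,v)$ iff $v\in Cl(u)$, and whose edges are the edges of that graph between its vertices. *)

theory Defs
  imports "HOL-Algebra.Algebra" Complex_Main
begin

definition grp_center :: "('a,'b) monoid_scheme \<Rightarrow> 'a set" where
  "grp_center Y = {z \<in> carrier Y. \<forall>x\<in>carrier Y. monoid.mult Y z x = monoid.mult Y x z}"

definition abelian_or_noncentral_abelian_normal :: "('a,'b) monoid_scheme \<Rightarrow> bool" where
  "abelian_or_noncentral_abelian_normal Y \<longleftrightarrow>
     comm_group Y \<or>
     (\<exists>B. B \<lhd> Y \<and> comm_group (Y\<lparr>carrier := B\<rparr>) \<and> \<not> B \<subseteq> grp_center Y)"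

definition class_C :: "('a,'b) monoid_scheme \<Rightarrow> bool" where
  "class_C G \<longleftrightarrow> group G \<and> finite (carrier G) \<and>
     (\<forall>H. subgroup H G \<longrightarrow> abelian_or_noncentral_abelian_normal (G\<lparr>carrier := H\<rparr>)) \<and>
     (\<forall>K. K \<lhd> G \<longrightarrow> abelian_or_noncentral_abelian_normal (G Mod K))"

definition lin_char :: "('a,'b) monoid_scheme \<Rightarrow> 'a set \<Rightarrow> ('a \<Rightarrow> complex) \<Rightarrow> bool" where
  "lin_char G A \<theta> \<longleftrightarrow>
     (\<forall>x\<in>A. \<theta> x \<noteq> 0) \<and>
     (\<forall>x\<in>A. \<forall>y\<in>A. \<theta> (monoid.mult G x y) = \<theta> x * \<theta> y) \<and>
     (\<forall>x. x \<notin> A \<longrightarrow> \<theta> x = 0)"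

definition lin_ker :: "'a set \<Rightarrow> ('a \<Rightarrow> complex) \<Rightarrow> 'a set" where
  "lin_ker A \<theta> = {a \<in> A. \<theta> a = 1}"

definition trivial_char :: "'a set \<Rightarrow> 'a \<Rightarrow> complex" where
  "trivial_char N = (\<lambda>x. if x \<in> N then 1 else 0)"

text \<open>Induced class function psi^G, where psi is a class function on H (zero outside H).\<close>
definition induced :: "('a,'b) monoid_scheme \<Rightarrow> 'a set \<Rightarrow> ('a \<Rightarrow> complex) \<Rightarrow> 'a \<Rightarrow> complex" where
  "induced G H \<psi> g = (if g \<in> carrier G then
      (1 / of_nat (card H)) * (\<Sum>x\<in>carrier G. \<psi> (monoid.mult G (monoid.mult G x g) (m_inv G x)))
    else 0)"

definition char_kernel :: "('a,'b) monoid_scheme \<Rightarrow> ('a \<Rightarrow> complex) \<Rightarrow> 'a set" where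
  "char_kernel G chr = {g \<in> carrier G. chr g = chr (monoid.one G)}"

definition conj_char :: "('a,'b) monoid_scheme \<Rightarrow> 'a set \<Rightarrow> 'a \<Rightarrow> ('a \<Rightarrow> complex) \<Rightarrow> 'a \<Rightarrow> complex" where
  "conj_char G A x \<psi> = (\<lambda>g. if g \<in> A then \<psi> (monoid.mult G (monoid.mult G x g) (m_inv G x)) else 0)"

type_synonym 'a triple = "'a set \<times> 'a set \<times> ('a \<Rightarrow> complex)"

definition N_linear_triple :: "('a,'b) monoid_scheme \<Rightarrow> 'a set \<Rightarrow> 'a triple \<Rightarrow> bool" where
  "N_linear_triple G N t \<longleftrightarrow> (case t of (H, A, \<theta>) \<Rightarrow>
      subgroup H G \<and> A \<lhd> (G\<lparr>carrier := H\<rparr>) \<and> lin_char G A \<theta> \<and>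
      (\<forall>h\<in>H. conj_char G A h \<theta> = \<theta>) \<and>
      char_kernel G (induced G A \<theta>) = N)"

definition Lin_tilde :: "('a,'b) monoid_scheme \<Rightarrow> 'a set \<Rightarrow> 'a set \<Rightarrow> 'a set \<Rightarrow> ('a \<Rightarrow> complex)
    \<Rightarrow> ('a \<Rightarrow> complex) set" where
  "Lin_tilde G N B M lam = {\<phi>. lin_char G M \<phi> \<and> B \<subseteq> M \<and> (\<forall>b\<in>B. \<phi> b = lam b) \<and>
      char_kernel G (induced G M \<phi>) = N}"

definition calA_candidate :: "('a,'b) monoid_scheme \<Rightarrow> 'a triple \<Rightarrow> 'a set \<Rightarrow> bool" where
  "calA_candidate G t K \<longleftrightarrow> (case t of (H, A, \<theta>) \<Rightarrow>
      K \<lhd> (G\<lparr>carrier := H\<rparr>) \<and> lin_ker A \<theta> \<subseteq> K \<and>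
      comm_group ((G\<lparr>carrier := K\<rparr>) Mod (lin_ker A \<theta>)))"

definition is_calA :: "('a,'b) monoid_scheme \<Rightarrow> 'a triple \<Rightarrow> 'a set \<Rightarrow> bool" where
  "is_calA G t K \<longleftrightarrow> calA_candidate G t K \<and>
      (\<forall>K'. calA_candidate G t K' \<longrightarrow> card K' \<le> card K)"

definition field_aut :: "(complex \<Rightarrow> complex) \<Rightarrow> bool" where
  "field_aut \<sigma> \<longleftrightarrow> bij \<sigma> \<and> (\<forall>x y. \<sigma> (x + y) = \<sigma> x + \<sigma> y) \<and> (\<forall>x y. \<sigma> (x * y) = \<sigma> x * \<sigma> y)"

text \<open>Aut(C | theta): field automorphisms of C fixing Q(theta), i.e. fixing every value of theta
  (an automorphism fixes the field Q(theta) pointwise iff it fixes its generators).\<close>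
definition Aut_fix :: "'a set \<Rightarrow> ('a \<Rightarrow> complex) \<Rightarrow> (complex \<Rightarrow> complex) set" where
  "Aut_fix A \<theta> = {\<sigma>. field_aut \<sigma> \<and> (\<forall>a\<in>A. \<sigma> (\<theta> a) = \<theta> a)}"

definition act :: "('a,'b) monoid_scheme \<Rightarrow> 'a set \<Rightarrow> (complex \<Rightarrow> complex) \<Rightarrow> 'a \<Rightarrow> ('a \<Rightarrow> complex)
    \<Rightarrow> 'a \<Rightarrow> complex" where
  "act G K \<sigma> h \<phi> = \<sigma> \<circ> conj_char G K h \<phi>"

definition orbit_reps :: "('a,'b) monoid_scheme \<Rightarrow> 'a set \<Rightarrow> 'a set \<Rightarrow> ('a \<Rightarrow> complex) \<Rightarrow> 'a set
    \<Rightarrow> ('a \<Rightarrow> complex) set \<Rightarrow> ('a \<Rightarrow> complex) set \<Rightarrow> bool" where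
  "orbit_reps G H A \<theta> K S R \<longleftrightarrow> R \<subseteq> S \<and>
     (\<forall>\<phi>\<in>S. \<exists>!\<psi>. \<psi> \<in> R \<and> (\<exists>\<sigma>\<in>Aut_fix A \<theta>. \<exists>h\<in>H. \<psi> = act G K \<sigma> h \<phi>))"

definition inertia :: "('a,'b) monoid_scheme \<Rightarrow> 'a set \<Rightarrow> 'a set \<Rightarrow> ('a \<Rightarrow> complex) \<Rightarrow> 'a set" where
  "inertia G H K \<phi> = {h \<in> H. conj_char G K h \<phi> = \<phi>}"

definition admissible_choice :: "('a,'b) monoid_scheme \<Rightarrow> 'a set \<Rightarrow> ('a triple \<Rightarrow> 'a set)
    \<Rightarrow> ('a triple \<Rightarrow> ('a \<Rightarrow> complex) set) \<Rightarrow> bool" where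
  "admissible_choice G N cA Rep \<longleftrightarrow>
     (\<forall>H A \<theta>. N_linear_triple G N (H, A, \<theta>) \<longrightarrow>
        is_calA G (H, A, \<theta>) (cA (H, A, \<theta>)) \<and>
        orbit_reps G H A \<theta> (cA (H, A, \<theta>)) (Lin_tilde G N A (cA (H, A, \<theta>)) \<theta>) (Rep (H, A, \<theta>)))"

definition Cl :: "('a,'b) monoid_scheme \<Rightarrow> ('a triple \<Rightarrow> 'a set) \<Rightarrow> ('a triple \<Rightarrow> ('a \<Rightarrow> complex) set)
    \<Rightarrow> 'a triple \<Rightarrow> 'a triple set" where
  "Cl G cA Rep t = (case t of (H, A, \<theta>) \<Rightarrow>
      if H = A then {} else (\<lambda>\<phi>. (inertia G H (cA t) \<phi>, cA t, \<phi>)) ` Rep t)"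

definition root_triple :: "('a,'b) monoid_scheme \<Rightarrow> 'a set \<Rightarrow> 'a triple" where
  "root_triple G N = (carrier G, N, trivial_char N)"

definition Cl_edges :: "('a,'b) monoid_scheme \<Rightarrow> 'a set \<Rightarrow> ('a triple \<Rightarrow> 'a set)
    \<Rightarrow> ('a triple \<Rightarrow> ('a \<Rightarrow> complex) set) \<Rightarrow> ('a triple \<times> 'a triple) set" where
  "Cl_edges G N cA Rep = {(u, v). N_linear_triple G N u \<and> N_linear_triple G N v \<and> v \<in> Cl G cA Rep u}"

definition GN_vertices :: "('a,'b) monoid_scheme \<Rightarrow> 'a set \<Rightarrow> ('a triple \<Rightarrow> 'a set)
    \<Rightarrow> ('a triple \<Rightarrow> ('a \<Rightarrow> complex) set) \<Rightarrow> 'a triple set" where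
  "GN_vertices G N cA Rep = {v. N_linear_triple G N v \<and> (root_triple G N, v) \<in> (Cl_edges G N cA Rep)\<^sup>*}"

definition GN_edges :: "('a,'b) monoid_scheme \<Rightarrow> 'a set \<Rightarrow> ('a triple \<Rightarrow> 'a set)
    \<Rightarrow> ('a triple \<Rightarrow> ('a \<Rightarrow> complex) set) \<Rightarrow> ('a triple \<times> 'a triple) set" where
  "GN_edges G N cA Rep = Cl_edges G N cA Rep \<inter> (GN_vertices G N cA Rep \<times> GN_vertices G N cA Rep)"

definition GN_path :: "('a,'b) monoid_scheme \<Rightarrow> 'a set \<Rightarrow> ('a triple \<Rightarrow> 'a set)
    \<Rightarrow> ('a triple \<Rightarrow> ('a \<Rightarrow> complex) set) \<Rightarrow> 'a triple \<Rightarrow> 'a triple \<Rightarrow> 'a triple list \<Rightarrow> bool" where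
  "GN_path G N cA Rep u v p \<longleftrightarrow> p \<noteq> [] \<and> hd p = u \<and> last p = v \<and> distinct p \<and>
     set p \<subseteq> GN_vertices G N cA Rep \<and>
     (\<forall>i. Suc i < length p \<longrightarrow> (p ! i, p ! Suc i) \<in> GN_edges G N cA Rep)"

end

theory Submission
  imports Defs "HOL-Library.Transitive_Closure_Table"
begin

text \<open>Along an edge u \<rightarrow> v of the graph, v is determined by its character, a linear character
  of cA u extending the character of u. Characters therefore only get extended along paths, so a
  vertex w reachable from v carries the character of v on cA u, and w tells which child of u a
  path to w must pass through. Two simple paths from the root to w thus agree step by step.\<close>

lemma rtrancl_path_iff_chain:
  "rtrancl_path r x xs y \<longleftrightarrow> (\<forall>i<length xs. r ((x # xs) ! i) (xs ! i)) \<and> last (x # xs) = y"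
proof (induction xs arbitrary: x)
  case Nil
  show ?case by (auto intro: rtrancl_path.base elim: rtrancl_path.cases)
next
  case (Cons z zs)
  have "rtrancl_path r x (z # zs) y \<longleftrightarrow> r x z \<and> rtrancl_path r z zs y"
    by (auto intro: rtrancl_path.step elim: rtrancl_path.cases)
  also have "\<dots> \<longleftrightarrow> (\<forall>i<length (z # zs). r ((x # z # zs) ! i) ((z # zs) ! i)) \<and> last (x # z # zs) = y"
    by (auto simp: Cons.IH less_Suc_eq_0_disj)
  finally show ?case .
qed

lemma rtrancl_path_through:
  assumes "rtrancl_path r x xs y" and "z \<in> set (x # xs)"
  shows "r\<^sup>*\<^sup>* x z \<and> r\<^sup>*\<^sup>* z y"
  using assms
proof (induction arbitrary: z)
  case (step x w ws y)
  show ?case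
  proof (cases "z = x")
    case True
    with step.hyps show ?thesis
      by (metis rtrancl_path.step rtranclp_eq_rtrancl_path rtranclp.rtrancl_refl)
  next
    case False
    with step show ?thesis by (auto intro: converse_rtranclp_into_rtranclp)
  qed
qed simp

lemma rtrancl_path_unique:
  assumes "rtrancl_path r x xs y" and "rtrancl_path r x ys y"
    and "distinct (x # xs)" and "distinct (x # ys)"
    and determined: "\<And>a b b'. r a b \<Longrightarrow> r a b' \<Longrightarrow> r\<^sup>*\<^sup>* b y \<Longrightarrow> r\<^sup>*\<^sup>* b' y \<Longrightarrow> b = b'"
  shows "xs = ys"
  using assms(1-4)
proof (induction xs arbitrary: x ys)
  case Nil
  then have "x = y" by (auto elim: rtrancl_path.cases)
  show ?case
  proof (rule ccontr)
    assume "[] \<noteq> ys"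
    then have "last ys = y" using Nil.prems(2) by (simp add: rtrancl_path_last)
    with \<open>[] \<noteq> ys\<close> \<open>x = y\<close> Nil.prems(4) show False by (metis distinct.simps(2) last_in_set)
  qed
next
  case (Cons z zs)
  then have "r x z" and path: "rtrancl_path r z zs y" by (auto elim: rtrancl_path.cases)
  have "ys \<noteq> []"
  proof
    assume "ys = []"
    with Cons.prems(2) have "x = y" by (auto elim: rtrancl_path.cases)
    moreover have "last (z # zs) = y" using Cons.prems(1) by (rule rtrancl_path_last) simp
    ultimately show False using Cons.prems(3) last_in_set[of "z # zs"] by auto
  qed
  then obtain z' zs' where ys: "ys = z' # zs'" by (cases ys) auto
  with Cons.prems(2) have "r x z'" and path': "rtrancl_path r z' zs' y"
    by (auto elim: rtrancl_path.cases)
  have "z = z'"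
  proof (rule determined[OF \<open>r x z\<close> \<open>r x z'\<close>])
    show "r\<^sup>*\<^sup>* z y" "r\<^sup>*\<^sup>* z' y"
      using path path' by (auto simp: rtranclp_eq_rtrancl_path)
  qed
  with Cons.IH[OF path] path' Cons.prems(3,4) show ?case unfolding ys by simp
qed

lemma Cl_edge_child:
  assumes "admissible_choice G N cA Rep" and "(u, v) \<in> Cl_edges G N cA Rep"
  obtains \<phi> where "v = (inertia G (fst u) (cA u) \<phi>, cA u, \<phi>)" and "lin_char G (cA u) \<phi>"
    and "fst (snd u) \<subseteq> cA u" and "\<forall>b\<in>fst (snd u). \<phi> b = snd (snd u) b"
proof -
  obtain H A \<theta> where u: "u = (H, A, \<theta>)" by (cases u)
  from assms(2) have "N_linear_triple G N u" and "v \<in> Cl G cA Rep u"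
    unfolding Cl_edges_def by auto
  then obtain \<phi> where v: "v = (inertia G H (cA u) \<phi>, cA u, \<phi>)" and "\<phi> \<in> Rep u"
    and "Rep u \<subseteq> Lin_tilde G N A (cA u) \<theta>"
    using assms(1) unfolding Cl_def admissible_choice_def orbit_reps_def u
    by (auto split: if_splits)
  then have "\<phi> \<in> Lin_tilde G N A (cA u) \<theta>" by blast
  then show thesis using that v unfolding Lin_tilde_def u by auto
qed

lemma Cl_edges_rtrancl_extends_char:
  assumes "admissible_choice G N cA Rep" and "(u, w) \<in> (Cl_edges G N cA Rep)\<^sup>*"
  shows "fst (snd u) \<subseteq> fst (snd w) \<and> (\<forall>a\<in>fst (snd u). snd (snd w) a = snd (snd u) a)"
  using assms(2)
proof (induction rule: rtrancl_induct)
  case (step w w')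
  obtain \<phi> where "w' = (inertia G (fst w) (cA w) \<phi>, cA w, \<phi>)"
    and "fst (snd w) \<subseteq> cA w" and "\<forall>b\<in>fst (snd w). \<phi> b = snd (snd w) b"
    using Cl_edge_child[OF assms(1) step.hyps(2)] by blast
  with step.IH show ?case by auto
qed simp

lemma Cl_edges_child_determined:
  assumes adm: "admissible_choice G N cA Rep"
    and "(u, v) \<in> Cl_edges G N cA Rep" and "(u, v') \<in> Cl_edges G N cA Rep"
    and "(v, w) \<in> (Cl_edges G N cA Rep)\<^sup>*" and "(v', w) \<in> (Cl_edges G N cA Rep)\<^sup>*"
  shows "v = v'"
proof -
  obtain \<phi> where v: "v = (inertia G (fst u) (cA u) \<phi>, cA u, \<phi>)" and "lin_char G (cA u) \<phi>"
    using Cl_edge_child[OF adm assms(2)] by blast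
  obtain \<psi> where v': "v' = (inertia G (fst u) (cA u) \<psi>, cA u, \<psi>)" and "lin_char G (cA u) \<psi>"
    using Cl_edge_child[OF adm assms(3)] by blast
  have "\<forall>a\<in>cA u. \<phi> a = \<psi> a"
    using Cl_edges_rtrancl_extends_char[OF adm assms(4)] Cl_edges_rtrancl_extends_char[OF adm assms(5)]
    unfolding v v' by auto
  moreover have "\<forall>a. a \<notin> cA u \<longrightarrow> \<phi> a = \<psi> a"
    using \<open>lin_char G (cA u) \<phi>\<close> \<open>lin_char G (cA u) \<psi>\<close> unfolding lin_char_def by simp
  ultimately have "\<phi> = \<psi>" by blast
  then show ?thesis unfolding v v' by simp
qed

lemma GN_vertices_intermediate:
  assumes "(root_triple G N, z) \<in> (Cl_edges G N cA Rep)\<^sup>*" and "(z, v) \<in> (Cl_edges G N cA Rep)\<^sup>*"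
    and "v \<in> GN_vertices G N cA Rep"
  shows "z \<in> GN_vertices G N cA Rep"
  using assms(2)
proof (cases rule: converse_rtranclE)
  case base
  then show ?thesis using assms(3) by simp
next
  case (step w)
  then have "N_linear_triple G N z" unfolding Cl_edges_def by simp
  with assms(1) show ?thesis unfolding GN_vertices_def by simp
qed

lemma GN_path_iff_rtrancl_path:
  assumes "v \<in> GN_vertices G N cA Rep"
  shows "GN_path G N cA Rep (root_triple G N) v p \<longleftrightarrow>
    (\<exists>xs. p = root_triple G N # xs \<and> distinct p \<and>
      rtrancl_path (\<lambda>a b. (a, b) \<in> Cl_edges G N cA Rep) (root_triple G N) xs v)"
    (is "?path \<longleftrightarrow> (\<exists>xs. p = ?R # xs \<and> _ \<and> rtrancl_path ?r _ _ _)")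
proof
  assume ?path
  then obtain xs where p: "p = ?R # xs" unfolding GN_path_def by (cases p) auto
  with \<open>?path\<close> have "\<forall>i<length xs. ?r ((?R # xs) ! i) (xs ! i)" and "last p = v"
    unfolding GN_path_def GN_edges_def by auto
  with \<open>?path\<close> p show "\<exists>xs. p = ?R # xs \<and> distinct p \<and> rtrancl_path ?r ?R xs v"
    unfolding GN_path_def by (auto simp: rtrancl_path_iff_chain)
next
  assume "\<exists>xs. p = ?R # xs \<and> distinct p \<and> rtrancl_path ?r ?R xs v"
  then obtain xs where p: "p = ?R # xs" and "distinct p" and path: "rtrancl_path ?r ?R xs v"
    by blast
  have vertices: "set p \<subseteq> GN_vertices G N cA Rep"
  proof
    fix z assume "z \<in> set p"
    with path p have "?r\<^sup>*\<^sup>* ?R z" and "?r\<^sup>*\<^sup>* z v" by (auto dest: rtrancl_path_through)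
    with assms show "z \<in> GN_vertices G N cA Rep"
      by (auto intro: GN_vertices_intermediate simp: rtrancl_def)
  qed
  have "\<forall>i<length xs. ?r ((?R # xs) ! i) (xs ! i)" and "last p = v"
    using path p by (auto simp: rtrancl_path_iff_chain)
  moreover have "\<forall>i<length p. p ! i \<in> GN_vertices G N cA Rep"
    using vertices nth_mem by blast
  ultimately show ?path
    using vertices p \<open>distinct p\<close> unfolding GN_path_def GN_edges_def by auto
qed

theorem lemma1:
  fixes G :: "('a, 'b) monoid_scheme" and N :: "'a set"
    and cA :: "'a triple \<Rightarrow> 'a set" and Rep :: "'a triple \<Rightarrow> ('a \<Rightarrow> complex) set"
  assumes "class_C G"
    and "N \<lhd> G"
    and "admissible_choice G N cA Rep"
    and "v \<in> GN_vertices G N cA Rep"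
  shows "\<exists>!p. GN_path G N cA Rep (root_triple G N) v p"
proof -
  let ?R = "root_triple G N" and ?r = "\<lambda>a b. (a, b) \<in> Cl_edges G N cA Rep"
  have "?r\<^sup>*\<^sup>* ?R v" using assms(4) unfolding GN_vertices_def by (simp add: rtrancl_def)
  then obtain xs where "rtrancl_path ?r ?R xs v" and "distinct (?R # xs)"
    by (metis rtranclp_eq_rtrancl_path rtrancl_path_distinct)
  moreover have "xs' = xs"
    if "rtrancl_path ?r ?R xs' v" "distinct (?R # xs')" for xs'
    using that(1) \<open>rtrancl_path ?r ?R xs v\<close> that(2) \<open>distinct (?R # xs)\<close>
  proof (rule rtrancl_path_unique)
    show "b = b'" if "?r a b" "?r a b'" "?r\<^sup>*\<^sup>* b v" "?r\<^sup>*\<^sup>* b' v" for a b b'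
      using Cl_edges_child_determined[OF assms(3)] that by (simp add: rtrancl_def)
  qed
  ultimately show ?thesis
    unfolding GN_path_iff_rtrancl_path[OF assms(4)] by blast
qed

end
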